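(* In the setting described in the context, for every $t\in\{0,1,\dots,T\}$ the function $\tilde V^{(t)}_\theta(s)$, viewed as a function of $(\theta,s)$, is Lipschitz with constant $L_{\tilde V}^{(t)}=3T^2L_{\tilde R_\theta}\bar L_{\tilde f_\theta}^{T-t-1}$.
   Context: Transitions $s_{t+1}=f(s_t,a_t)+\zeta_t$ with $\zeta_t\sim p(\zeta)$ i.i.d.; deterministic policy $\pi_\theta$ perturbed by action noise $\xi\sim p_\xi$: $a=\pi_\theta(s)+\xi$. Let $\tilde f_\theta(s,\xi)=f(s,\pi_\theta(s)+\xi)$ and $\tilde R_\theta(s)=\mathbb{E}_{p_\xi}[R(s,\pi_\theta(s)+\xi)]$. Value functions: $\tilde V^{(T)}_\theta\equiv0$ and $\tilde V^{(t)}_\theta(s)=\mathbb{E}_{p_\xi(\xi),p(\zeta)}[\tilde R_\theta(s)+\tilde V^{(t+1)}_\theta(\tilde f_\theta(s,\xi)+\zeta)]$. $L_h$ is a Lipschitz constant (Euclidean norm) of $h$ jointly in all its arguments ($(\theta,s)$, resp. $(\theta,s,\xi)$), and $\bar L_h=\max\{L_{\nabla h},L_h,1\}$. Standing assumption: $\tilde f_\theta,\tilde R_\theta$ are Lipschitz and twice continuously differentiable with Lipschitz first derivative. *)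

theory Defs
  imports "HOL-Analysis.Analysis" "HOL-Probability.Probability"
begin

definition ftil :: "('s \<Rightarrow> 'a \<Rightarrow> 's) \<Rightarrow> ('p \<Rightarrow> 's \<Rightarrow> 'a::real_vector) \<Rightarrow> 'p \<Rightarrow> 's \<Rightarrow> 'a \<Rightarrow> 's" where
  "ftil f pol theta s xi = f s (pol theta s + xi)"

definition Rtil :: "('s \<Rightarrow> 'a \<Rightarrow> real) \<Rightarrow> ('p \<Rightarrow> 's \<Rightarrow> 'a::real_vector) \<Rightarrow> 'a measure \<Rightarrow> 'p \<Rightarrow> 's \<Rightarrow> real" where
  "Rtil R pol pxi theta s = (\<integral>xi. R s (pol theta s + xi) \<partial>pxi)"

fun Vrem :: "('p \<Rightarrow> 's \<Rightarrow> 'a \<Rightarrow> 's::real_vector) \<Rightarrow> ('p \<Rightarrow> 's \<Rightarrow> real) \<Rightarrow> 'a measure \<Rightarrow> 's measure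
              \<Rightarrow> nat \<Rightarrow> 'p \<Rightarrow> 's \<Rightarrow> real" where
  "Vrem ft Rt pxi pzeta 0 theta s = 0"
| "Vrem ft Rt pxi pzeta (Suc k) theta s =
     (\<integral>(xi, zeta). Rt theta s + Vrem ft Rt pxi pzeta k theta (ft theta s xi + zeta) \<partial>(pxi \<Otimes>\<^sub>M pzeta))"

text \<open>tilde V^{(t)}_theta(s) for horizon T (meaningful for t \<le> T).\<close>
definition Vtil :: "nat \<Rightarrow> ('p \<Rightarrow> 's \<Rightarrow> 'a \<Rightarrow> 's::real_vector) \<Rightarrow> ('p \<Rightarrow> 's \<Rightarrow> real) \<Rightarrow> 'a measure \<Rightarrow> 's measure
              \<Rightarrow> nat \<Rightarrow> 'p \<Rightarrow> 's \<Rightarrow> real" where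
  "Vtil T ft Rt pxi pzeta t = Vrem ft Rt pxi pzeta (T - t)"

definition Lbar :: "real \<Rightarrow> real \<Rightarrow> real" where
  "Lbar Lgrad L = max Lgrad (max L 1)"

end

theory Submission
  imports Defs
begin

text \<open>Write V_k for the value function with k = T - t steps to go and let c = Lbar LDf Lf, so that
  c \<ge> max L_f 1. By induction on k,
  |V_k(\<theta>,s) - V_k(\<theta>',s')| \<le> L_R c^(k-1) (k^2 |\<theta> - \<theta>'| + k |s - s'|):
  an expectation over the noise moves by no more than its integrand, the reward moves by at most
  L_R (|\<theta> - \<theta>'| + |s - s'|), and the next state f(\<theta>,s,\<xi>) + \<zeta> by at most c (|\<theta> - \<theta>'| + |s - s'|).
  So the state coefficient is multiplied by c at each step, while the parameter, which enters every
  later step directly, also collects the state coefficient; hence the quadratic growth in k.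
  Finally k^2 + k \<le> 3T^2.\<close>

lemma (in prob_space) abs_integral_diff_le:
  fixes g h :: "'a \<Rightarrow> real"
  assumes g: "g \<in> borel_measurable M" and h: "h \<in> borel_measurable M"
    and bound: "\<And>x. \<bar>g x - h x\<bar> \<le> C"
  shows "\<bar>integral\<^sup>L M g - integral\<^sup>L M h\<bar> \<le> C"
proof -
  have diff_int: "integrable M (\<lambda>x. g x - h x)"
    using g h bound by (intro integrable_const_bound[where B = C]) auto
  have "integrable M g \<longleftrightarrow> integrable M h"
  proof
    assume "integrable M g"
    from Bochner_Integration.integrable_diff[OF this diff_int] show "integrable M h" by simp
  next
    assume "integrable M h"
    from Bochner_Integration.integrable_add[OF diff_int this] show "integrable M g" by simp
  qed
  moreover have "0 \<le> C"
    using bound[of undefined] by linarith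
  moreover have "\<bar>integral\<^sup>L M g - integral\<^sup>L M h\<bar> \<le> C" if "integrable M g" "integrable M h"
  proof -
    have "\<bar>integral\<^sup>L M g - integral\<^sup>L M h\<bar> = \<bar>integral\<^sup>L M (\<lambda>x. g x - h x)\<bar>"
      using that by simp
    also have "\<dots> \<le> integral\<^sup>L M (\<lambda>x. \<bar>g x - h x\<bar>)"
      by (rule integral_abs_bound)
    also have "\<dots> \<le> integral\<^sup>L M (\<lambda>x. C)"
      using diff_int bound by (intro integral_mono) auto
    finally show ?thesis
      by (simp add: prob_space)
  qed
  ultimately show ?thesis
    by (cases "integrable M g") (auto simp: not_integrable_integral_eq)
qed

lemma lipschitz_on_split_dist_le:
  fixes g :: "'a::real_normed_vector \<Rightarrow> 'b::real_normed_vector \<Rightarrow> 'c::metric_space"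
  assumes "L-lipschitz_on UNIV (\<lambda>(x, y). g x y)"
  shows "dist (g x y) (g x' y') \<le> L * (norm (x - x') + norm (y - y'))"
proof -
  have "dist (g x y) (g x' y') \<le> L * dist (x, y) (x', y')"
    using lipschitz_onD[OF assms, of "(x, y)" "(x', y')"] by simp
  also have "\<dots> \<le> L * (norm (x - x') + norm (y - y'))"
    using lipschitz_on_nonneg[OF assms] norm_Pair_le[of "x - x'" "y - y'"]
    by (intro mult_left_mono) (auto simp: dist_norm)
  finally show ?thesis .
qed

lemma lipschitz_on_pairI:
  fixes g :: "'a::real_normed_vector \<Rightarrow> 'b::real_normed_vector \<Rightarrow> 'c::metric_space"
  assumes bound: "\<And>x y x' y'. dist (g x y) (g x' y') \<le> A * norm (x - x') + B * norm (y - y')"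
    and "0 \<le> A" "0 \<le> B"
  shows "(A + B)-lipschitz_on UNIV (\<lambda>(x, y). g x y)"
proof (rule lipschitz_onI)
  fix z z' :: "'a \<times> 'b"
  obtain x y x' y' where z: "z = (x, y)" and z': "z' = (x', y')"
    by fastforce
  have "norm (x - x') \<le> dist z z'" "norm (y - y') \<le> dist z z'"
    using norm_fst_le[of "x - x'" "y - y'"] norm_snd_le[of "y - y'" "x - x'"]
    by (simp_all add: z z' dist_norm)
  then have "A * norm (x - x') + B * norm (y - y') \<le> (A + B) * dist z z'"
    using assms(2,3) by (simp add: distrib_right add_mono mult_left_mono)
  then show "dist ((\<lambda>(x, y). g x y) z) ((\<lambda>(x, y). g x y) z') \<le> (A + B) * dist z z'"
    using bound[of x y x' y'] by (simp add: z z')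
qed (use assms in simp)

lemma continuous_on_borel_measurable_pair_measure:
  fixes g :: "'a::second_countable_topology \<times> 'b::second_countable_topology \<Rightarrow> 'c::topological_space"
  assumes "sets M = sets borel" "sets N = sets borel" and "continuous_on UNIV g"
  shows "g \<in> borel_measurable (M \<Otimes>\<^sub>M N)"
proof -
  have "sets (M \<Otimes>\<^sub>M N) = sets (borel \<Otimes>\<^sub>M borel :: ('a \<times> 'b) measure)"
    using assms(1,2) by (intro sets_pair_measure_cong) auto
  also have "\<dots> = sets (borel :: ('a \<times> 'b) measure)"
    by (simp only: borel_prod)
  finally have "sets (M \<Otimes>\<^sub>M N) = sets (borel :: ('a \<times> 'b) measure)" .
  then have "borel_measurable (M \<Otimes>\<^sub>M N) = borel_measurable (borel :: ('a \<times> 'b) measure)"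
    by (rule measurable_cong_sets) (rule refl)
  then show ?thesis
    using borel_measurable_continuous_onI[OF assms(3)] by (rule ssubst)
qed

lemma transition_integrand_borel_measurable:
  fixes F :: "'p::topological_space \<Rightarrow> 's::{real_normed_vector, second_countable_topology}
      \<Rightarrow> 'a::{real_normed_vector, second_countable_topology} \<Rightarrow> 's"
    and V :: "'s \<Rightarrow> real"
  assumes "sets pxi = sets borel" "sets pzeta = sets borel"
    and "continuous_on UNIV (\<lambda>(theta, s, xi). F theta s xi)" and V_cont: "continuous_on UNIV V"
  shows "(\<lambda>(xi, zeta). r + V (F th s xi + zeta)) \<in> borel_measurable (pxi \<Otimes>\<^sub>M pzeta)"
proof -
  have "continuous_on UNIV (\<lambda>z::'a \<times> 's. (\<lambda>(theta, s, xi). F theta s xi) (th, s, fst z))"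
    using assms(3) by (rule continuous_on_compose2) (auto intro!: continuous_intros)
  then have "continuous_on UNIV (\<lambda>z::'a \<times> 's. F th s (fst z) + snd z)"
    by (auto intro!: continuous_intros)
  then have "continuous_on UNIV (\<lambda>z. V (F th s (fst z) + snd z))"
    by (rule continuous_on_compose2[OF V_cont _ subset_UNIV])
  then have "continuous_on UNIV (\<lambda>z. r + V (F th s (fst z) + snd z))"
    by (auto intro!: continuous_intros)
  then show ?thesis
    unfolding case_prod_beta' by (rule continuous_on_borel_measurable_pair_measure[OF assms(1,2)])
qed

lemma value_bound_recursion:
  fixes LR c a b :: real
  assumes "0 \<le> LR" "1 \<le> c" "0 \<le> a" "0 \<le> b"
  shows "LR * (a + b) + LR * c ^ (k - 1) * ((real k)\<^sup>2 * a + real k * (c * (a + b)))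
           \<le> LR * c ^ k * ((real (Suc k))\<^sup>2 * a + real (Suc k) * b)"
proof (cases k)
  case 0
  then show ?thesis by simp
next
  case (Suc m)
  let ?C = "LR * c ^ k"
  have ck: "c ^ (k - 1) * c = c ^ k" and ck_mono: "c ^ (k - 1) \<le> c ^ k"
    using Suc assms(2) by (simp_all add: power_increasing)
  have "1 \<le> c ^ k"
    using assms(2) by (rule one_le_power)
  then have "LR * (a + b) \<le> ?C * (a + b)"
    using assms by (intro mult_right_mono) (auto simp: mult_le_cancel_left1)
  moreover have "LR * c ^ (k - 1) * ((real k)\<^sup>2 * a) \<le> ?C * ((real k)\<^sup>2 * a)"
    using assms ck_mono by (intro mult_right_mono mult_left_mono) auto
  moreover have "LR * c ^ (k - 1) * (real k * (c * (a + b))) = ?C * (real k * (a + b))"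
    by (simp flip: ck add: algebra_simps)
  ultimately have "LR * (a + b) + LR * c ^ (k - 1) * ((real k)\<^sup>2 * a + real k * (c * (a + b)))
      \<le> ?C * ((1 + real k + (real k)\<^sup>2) * a + (1 + real k) * b)"
    by (simp add: algebra_simps)
  also have "\<dots> \<le> ?C * ((real (Suc k))\<^sup>2 * a + real (Suc k) * b)"
    using assms by (intro mult_left_mono add_mono mult_right_mono)
      (auto simp: power2_eq_square algebra_simps)
  finally show ?thesis .
qed

lemma value_increment_le:
  fixes LR c a b d r r' v v' :: real
  assumes "\<bar>r - r'\<bar> \<le> LR * (a + b)" "\<bar>v - v'\<bar> \<le> LR * c ^ (k - 1) * ((real k)\<^sup>2 * a + real k * d)"
    and "d \<le> c * (a + b)" and "0 \<le> LR" "1 \<le> c" "0 \<le> a" "0 \<le> b"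
  shows "\<bar>(r + v) - (r' + v')\<bar> \<le> LR * c ^ k * ((real (Suc k))\<^sup>2 * a + real (Suc k) * b)"
proof -
  have "LR * c ^ (k - 1) * ((real k)\<^sup>2 * a + real k * d)
      \<le> LR * c ^ (k - 1) * ((real k)\<^sup>2 * a + real k * (c * (a + b)))"
    using assms(3-5) by (intro mult_left_mono add_left_mono) auto
  then have "\<bar>(r + v) - (r' + v')\<bar>
      \<le> LR * (a + b) + LR * c ^ (k - 1) * ((real k)\<^sup>2 * a + real k * (c * (a + b)))"
    using assms(1,2) abs_diff_triangle_ineq[of r v r' v'] by linarith
  also have "\<dots> \<le> LR * c ^ k * ((real (Suc k))\<^sup>2 * a + real (Suc k) * b)"
    using assms(4-7) by (rule value_bound_recursion)
  finally show ?thesis .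
qed

lemma Vrem_dist_le:
  fixes F :: "'p::real_normed_vector \<Rightarrow> 's::{real_normed_vector, second_countable_topology}
      \<Rightarrow> 'a::{real_normed_vector, second_countable_topology} \<Rightarrow> 's"
    and Rt :: "'p \<Rightarrow> 's \<Rightarrow> real"
  assumes pxi: "prob_space pxi" "sets pxi = sets borel"
    and pzeta: "prob_space pzeta" "sets pzeta = sets borel"
    and F_lip: "Lf-lipschitz_on UNIV (\<lambda>(theta, s, xi). F theta s xi)"
    and Rt_lip: "LR-lipschitz_on UNIV (\<lambda>(theta, s). Rt theta s)"
    and "1 \<le> c" "Lf \<le> c"
  shows "\<bar>Vrem F Rt pxi pzeta k th s - Vrem F Rt pxi pzeta k th' s'\<bar>
          \<le> LR * c ^ (k - 1) * ((real k)\<^sup>2 * norm (th - th') + real k * norm (s - s'))"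
proof (induction k arbitrary: th s th' s')
  case 0
  then show ?case by simp
next
  case (Suc k)
  let ?V = "Vrem F Rt pxi pzeta k"
  let ?next = "\<lambda>th s (xi, zeta). Rt th s + ?V th (F th s xi + zeta)"
  have LR0: "0 \<le> LR"
    using lipschitz_on_nonneg[OF Rt_lip] .
  have F_dist: "norm (F th s xi - F th' s' xi) \<le> c * (norm (th - th') + norm (s - s'))"
    for th th' s s' xi
  proof -
    have "norm (F th s xi - F th' s' xi) \<le> Lf * (norm (th - th') + norm (s - s'))"
      using lipschitz_on_split_dist_le[OF F_lip, of th "(s, xi)" th' "(s', xi)"]
      by (simp add: dist_norm norm_Pair)
    also have "\<dots> \<le> c * (norm (th - th') + norm (s - s'))"
      using \<open>Lf \<le> c\<close> by (intro mult_right_mono) auto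
    finally show ?thesis .
  qed
  have next_measurable: "?next th s \<in> borel_measurable (pxi \<Otimes>\<^sub>M pzeta)" for th s
  proof -
    have "(LR * c ^ (k - 1) * real k)-lipschitz_on UNIV (?V th)"
      using Suc.IH[of th _ th] LR0 \<open>1 \<le> c\<close> by (intro lipschitz_onI) (simp_all add: dist_norm mult.assoc)
    then show ?thesis
      by (intro transition_integrand_borel_measurable[OF pxi(2) pzeta(2) lipschitz_on_continuous_on[OF F_lip]]
          lipschitz_on_continuous_on)
  qed
  have "\<bar>?next th s z - ?next th' s' z\<bar>
        \<le> LR * c ^ k * ((real (Suc k))\<^sup>2 * norm (th - th') + real (Suc k) * norm (s - s'))" for z
  proof -
    obtain xi zeta where z: "z = (xi, zeta)"
      by fastforce
    have "\<bar>Rt th s - Rt th' s'\<bar> \<le> LR * (norm (th - th') + norm (s - s'))"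
      using lipschitz_on_split_dist_le[OF Rt_lip] by (simp add: dist_real_def)
    moreover have "\<bar>?V th (F th s xi + zeta) - ?V th' (F th' s' xi + zeta)\<bar>
        \<le> LR * c ^ (k - 1) * ((real k)\<^sup>2 * norm (th - th') + real k * norm (F th s xi - F th' s' xi))"
      using Suc.IH[of th "F th s xi + zeta" th' "F th' s' xi + zeta"] by simp
    ultimately show ?thesis
      unfolding z using F_dist[of th s xi th' s'] LR0 \<open>1 \<le> c\<close>
      by (simp only: case_prod_conv) (rule value_increment_le; simp)
  qed
  from prob_space.abs_integral_diff_le[OF prob_space_pair[OF pxi(1) pzeta(1)] next_measurable next_measurable this]
  show ?case
    by (simp only: Vrem.simps diff_Suc_1)
qed

lemma Vrem_lipschitz:
  fixes F :: "'p::real_normed_vector \<Rightarrow> 's::{real_normed_vector, second_countable_topology}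
      \<Rightarrow> 'a::{real_normed_vector, second_countable_topology} \<Rightarrow> 's"
    and Rt :: "'p \<Rightarrow> 's \<Rightarrow> real"
  assumes "prob_space pxi" "sets pxi = sets borel"
    and "prob_space pzeta" "sets pzeta = sets borel"
    and "Lf-lipschitz_on UNIV (\<lambda>(theta, s, xi). F theta s xi)"
    and Rt_lip: "LR-lipschitz_on UNIV (\<lambda>(theta, s). Rt theta s)"
    and "1 \<le> c" "Lf \<le> c"
  shows "(LR * c ^ (k - 1) * ((real k)\<^sup>2 + real k))-lipschitz_on UNIV
           (\<lambda>(theta, s). Vrem F Rt pxi pzeta k theta s)"
proof -
  have "0 \<le> LR"
    using lipschitz_on_nonneg[OF Rt_lip] .
  then have "(LR * c ^ (k - 1) * (real k)\<^sup>2 + LR * c ^ (k - 1) * real k)-lipschitz_on UNIV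
      (\<lambda>(theta, s). Vrem F Rt pxi pzeta k theta s)"
    using Vrem_dist_le[OF assms] \<open>1 \<le> c\<close>
    by (intro lipschitz_on_pairI) (auto simp: dist_real_def algebra_simps)
  then show ?thesis
    by (simp add: distrib_left)
qed

lemma value_lipschitz_constant_le:
  fixes LR c :: real
  assumes "0 \<le> LR" "1 \<le> c" "t \<le> T"
  shows "LR * c ^ (T - t - 1) * ((real (T - t))\<^sup>2 + real (T - t))
           \<le> 3 * (real T)\<^sup>2 * LR * c powi (int T - int t - 1)"
proof (cases "t = T")
  case True
  then show ?thesis
    using assms by simp
next
  case False
  define k where "k = T - t"
  then have exponent: "int T - int t - 1 = int (k - 1)" and "1 \<le> real k" "real k \<le> real T"
    using False assms(3) by auto
  have powi: "c powi (int T - int t - 1) = c ^ (k - 1)"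
    by (simp only: exponent power_int_of_nat)
  have "real k \<le> (real k)\<^sup>2" "(real k)\<^sup>2 \<le> (real T)\<^sup>2"
    using \<open>1 \<le> real k\<close> \<open>real k \<le> real T\<close> by (auto simp: power2_eq_square intro: mult_mono)
  then have "(real k)\<^sup>2 + real k \<le> 3 * (real T)\<^sup>2"
    using zero_le_power2[of "real T"] by linarith
  then have "LR * c ^ (k - 1) * ((real k)\<^sup>2 + real k) \<le> LR * c ^ (k - 1) * (3 * (real T)\<^sup>2)"
    using assms(1,2) by (intro mult_left_mono) auto
  then show ?thesis
    unfolding powi k_def[symmetric] by (simp add: algebra_simps)
qed

theorem lemma4:
  fixes f :: "'s::euclidean_space \<Rightarrow> 'a::euclidean_space \<Rightarrow> 's"
    and pol :: "'p::euclidean_space \<Rightarrow> 's \<Rightarrow> 'a"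
    and R :: "'s \<Rightarrow> 'a \<Rightarrow> real"
    and pxi :: "'a measure" and pzeta :: "'s measure"
    and T :: nat
    and Lf LDf LR LDR :: real
    and Df :: "'p \<times> 's \<times> 'a \<Rightarrow> ('p \<times> 's \<times> 'a) \<Rightarrow>\<^sub>L 's"
    and DR :: "'p \<times> 's \<Rightarrow> ('p \<times> 's) \<Rightarrow>\<^sub>L real"
  assumes pxi: "prob_space pxi" "sets pxi = sets borel"
    and pzeta: "prob_space pzeta" "sets pzeta = sets borel"
    \<comment> \<open>tilde f_theta: Lipschitz jointly in (theta,s,xi), C^2 with Lipschitz first derivative\<close>
    and f_lip: "Lf-lipschitz_on UNIV (\<lambda>(theta, s, xi). ftil f pol theta s xi)"
    and f_deriv: "\<And>z. ((\<lambda>(theta, s, xi). ftil f pol theta s xi) has_derivative blinfun_apply (Df z)) (at z)"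
    and f_C2: "\<exists>D2 :: 'p \<times> 's \<times> 'a \<Rightarrow> ('p \<times> 's \<times> 'a) \<Rightarrow>\<^sub>L (('p \<times> 's \<times> 'a) \<Rightarrow>\<^sub>L 's).
                 (\<forall>z. (Df has_derivative blinfun_apply (D2 z)) (at z)) \<and> continuous_on UNIV D2"
    and Df_lip: "LDf-lipschitz_on UNIV Df"
    \<comment> \<open>tilde R_theta: Lipschitz jointly in (theta,s), C^2 with Lipschitz first derivative\<close>
    and R_lip: "LR-lipschitz_on UNIV (\<lambda>(theta, s). Rtil R pol pxi theta s)"
    and R_deriv: "\<And>z. ((\<lambda>(theta, s). Rtil R pol pxi theta s) has_derivative blinfun_apply (DR z)) (at z)"
    and R_C2: "\<exists>D2 :: 'p \<times> 's \<Rightarrow> ('p \<times> 's) \<Rightarrow>\<^sub>L (('p \<times> 's) \<Rightarrow>\<^sub>L real).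
                 (\<forall>z. (DR has_derivative blinfun_apply (D2 z)) (at z)) \<and> continuous_on UNIV D2"
    and DR_lip: "LDR-lipschitz_on UNIV DR"
  shows "\<forall>t \<le> T.
           (3 * (real T)\<^sup>2 * LR * Lbar LDf Lf powi (int T - int t - 1))-lipschitz_on UNIV
             (\<lambda>(theta, s). Vtil T (ftil f pol) (Rtil R pol pxi) pxi pzeta t theta s)"
proof (intro allI impI)
  fix t assume "t \<le> T"
  define c where "c = Lbar LDf Lf"
  have "1 \<le> c" "Lf \<le> c"
    unfolding c_def Lbar_def by auto
  have "(LR * c ^ (T - t - 1) * ((real (T - t))\<^sup>2 + real (T - t)))-lipschitz_on UNIV
      (\<lambda>(theta, s). Vrem (ftil f pol) (Rtil R pol pxi) pxi pzeta (T - t) theta s)"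
    by (rule Vrem_lipschitz[OF pxi pzeta f_lip R_lip \<open>1 \<le> c\<close> \<open>Lf \<le> c\<close>])
  moreover have "LR * c ^ (T - t - 1) * ((real (T - t))\<^sup>2 + real (T - t))
      \<le> 3 * (real T)\<^sup>2 * LR * c powi (int T - int t - 1)"
    using lipschitz_on_nonneg[OF R_lip] \<open>1 \<le> c\<close> \<open>t \<le> T\<close> by (rule value_lipschitz_constant_le)
  ultimately show "(3 * (real T)\<^sup>2 * LR * Lbar LDf Lf powi (int T - int t - 1))-lipschitz_on UNIV
      (\<lambda>(theta, s). Vtil T (ftil f pol) (Rtil R pol pxi) pxi pzeta t theta s)"
    unfolding Vtil_def c_def by (auto intro: lipschitz_on_mono)
qed

end
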